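(* Let $(X,\mathrm{d})$ be a compact metric space and $f$ a bi-Lipschitz homeomorphism of $X$ such that $\mathrm{d}$ is $f$-hyperbolic. Then $f$ is Lipschitz-robustly expansive: there are $\epsilon,\delta>0$ such that every bi-Lipschitz homeomorphism $g$ of $(X,\mathrm{d})$ with $\mathrm{d}_L(f,g)<\epsilon$ is expansive with expansive constant $\delta$. Equivalently, every expansive homeomorphism of a compact metric space is Lipschitz-robustly expansive with respect to an $f$-hyperbolic metric.
   Context: A homeomorphism $g$ is expansive with expansive constant $\delta>0$ if $\mathrm{d}(g^n(x),g^n(y))\le\delta$ for all $n\in\mathbb Z$ implies $x=y$. A metric $\mathrm{d}$ defining the topology is $f$-hyperbolic if there are $\delta>0$, $\lambda>1$ such that $\mathrm{d}(x,y)<\delta$ implies $\max\{\mathrm{d}(f(x),f(y)),\mathrm{d}(f^{-1}(x),f^{-1}(y))\}\ge\lambda\,\mathrm{d}(x,y)$. $\mathrm{d}_{C^0}(f,g)=\max_{x}\mathrm{d}(f(x),g(x))+\max_x\mathrm{d}(f^{-1}(x),g^{-1}(x))$; $\mathrm{d}'_L(f,g)=\sup_{x\ne y}\left|\log\frac{\mathrm{d}(f(x),f(y))}{\mathrm{d}(g(x),g(y))}\right|$; $\mathrm{d}_L(f,g)=\mathrm{d}_{C^0}(f,g)+\mathrm{d}'_L(f,g)+\mathrm{d}'_L(f^{-1},g^{-1})$. *)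

theory Defs
  imports "HOL-Analysis.Analysis"
begin

text \<open>The compact metric space (X,d) is a compact subset X of a metric-space type,
  with d = dist. Maps are considered on X only; the inverse of f on X is inv_into X f.\<close>

definition bilip_homeo :: "'a::metric_space set \<Rightarrow> ('a \<Rightarrow> 'a) \<Rightarrow> bool" where
  "bilip_homeo X f \<longleftrightarrow> bij_betw f X X \<and> homeomorphism X X f (inv_into X f) \<and>
     (\<exists>L. lipschitz_on L X f \<and> lipschitz_on L X (inv_into X f))"

definition hyperbolic_metric :: "'a::metric_space set \<Rightarrow> ('a \<Rightarrow> 'a) \<Rightarrow> bool" where
  "hyperbolic_metric X f \<longleftrightarrow> (\<exists>\<delta>>0. \<exists>c>1. \<forall>x\<in>X. \<forall>y\<in>X. dist x y < \<delta> \<longrightarrow>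
     max (dist (f x) (f y)) (dist (inv_into X f x) (inv_into X f y)) \<ge> c * dist x y)"

definition iter_int :: "'a set \<Rightarrow> ('a \<Rightarrow> 'a) \<Rightarrow> int \<Rightarrow> 'a \<Rightarrow> 'a" where
  "iter_int X g n = (if n \<ge> 0 then g ^^ nat n else inv_into X g ^^ nat (- n))"

definition expansive_const :: "'a::metric_space set \<Rightarrow> ('a \<Rightarrow> 'a) \<Rightarrow> real \<Rightarrow> bool" where
  "expansive_const X g \<delta> \<longleftrightarrow> \<delta> > 0 \<and> (\<forall>x\<in>X. \<forall>y\<in>X.
     (\<forall>n::int. dist (iter_int X g n x) (iter_int X g n y) \<le> \<delta>) \<longrightarrow> x = y)"

text \<open>Suprema of nonnegative quantities; inserting 0 makes the empty case 0 and
  does not change the value otherwise.\<close>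
definition d_C0 :: "'a::metric_space set \<Rightarrow> ('a \<Rightarrow> 'a) \<Rightarrow> ('a \<Rightarrow> 'a) \<Rightarrow> real" where
  "d_C0 X f g = Sup (insert 0 ((\<lambda>x. dist (f x) (g x)) ` X))
              + Sup (insert 0 ((\<lambda>x. dist (inv_into X f x) (inv_into X g x)) ` X))"

definition d_L' :: "'a::metric_space set \<Rightarrow> ('a \<Rightarrow> 'a) \<Rightarrow> ('a \<Rightarrow> 'a) \<Rightarrow> real" where
  "d_L' X f g = Sup (insert 0 {\<bar>ln (dist (f x) (f y) / dist (g x) (g y))\<bar> | x y. x \<in> X \<and> y \<in> X \<and> x \<noteq> y})"

definition d_L :: "'a::metric_space set \<Rightarrow> ('a \<Rightarrow> 'a) \<Rightarrow> ('a \<Rightarrow> 'a) \<Rightarrow> real" where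
  "d_L X f g = d_C0 X f g + d_L' X f g + d_L' X (inv_into X f) (inv_into X g)"

end

theory Submission
  imports Defs
begin

(* Write g^-1 for inv_into X g.  If f expands by a factor c > 1 at scales
   below \<delta> (forward or backward), then any g whose distance ratios are uniformly within
   a factor s = sqrt c of those of f (and likewise for the inverses) still expands by the
   factor s at the same scales; this is exactly what d_L'(f,g) < ln s and
   d_L'(f^-1,g^-1) < ln s express.  A bijection that expands by a factor s > 1 below
   scale \<delta> is expansive with constant \<delta>/2: if two distinct orbits stayed \<delta>/2-close,
   the supremum S of their distances is positive, some distance exceeds S/s, and one
   more step forward or backward would exceed S. *)

definition bilip_bound :: "'a::metric_space set \<Rightarrow> ('a \<Rightarrow> 'a) \<Rightarrow> real \<Rightarrow> bool" where
  "bilip_bound X \<phi> L \<longleftrightarrow> (\<forall>x\<in>X. \<forall>y\<in>X.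
     dist (\<phi> x) (\<phi> y) \<le> L * dist x y \<and> dist x y \<le> L * dist (\<phi> x) (\<phi> y))"

lemma bilip_bound_dist_pos:
  assumes "bilip_bound X \<phi> L" "x \<in> X" "y \<in> X" "x \<noteq> y"
  shows "dist (\<phi> x) (\<phi> y) > 0"
proof (rule ccontr)
  assume "\<not> dist (\<phi> x) (\<phi> y) > 0"
  then have "dist (\<phi> x) (\<phi> y) = 0" by simp
  then have "dist x y \<le> 0" using assms(1-3) unfolding bilip_bound_def by fastforce
  then show False using assms(4) by simp
qed

text \<open>A bi-Lipschitz homeomorphism and its inverse share a two-sided bound: the lower
  bound for f is the Lipschitz bound of its inverse, and vice versa.\<close>
lemma bilip_homeo_bound:
  assumes "bilip_homeo X f"
  obtains L where "L > 0" "bilip_bound X f L" "bilip_bound X (inv_into X f) L"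
proof -
  from assms obtain L where bij: "bij_betw f X X" and lf: "lipschitz_on L X f"
    and lg: "lipschitz_on L X (inv_into X f)" unfolding bilip_homeo_def by blast
  define M where "M = max L 1"
  have "M > 0" "L \<le> M" unfolding M_def by auto
  have up_f: "dist (f x) (f y) \<le> M * dist x y" if "x \<in> X" "y \<in> X" for x y
    using lipschitz_onD[OF lf that] \<open>L \<le> M\<close> by (meson mult_right_mono order_trans zero_le_dist)
  have up_g: "dist (inv_into X f x) (inv_into X f y) \<le> M * dist x y" if "x \<in> X" "y \<in> X" for x y
    using lipschitz_onD[OF lg that] \<open>L \<le> M\<close> by (meson mult_right_mono order_trans zero_le_dist)
  have f_mem: "\<And>z. z \<in> X \<Longrightarrow> f z \<in> X" using bij by (meson bij_betwE)
  have h_mem: "\<And>z. z \<in> X \<Longrightarrow> inv_into X f z \<in> X" using bij by (metis bij_betw_def inv_into_into)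
  have f_h: "\<And>z. z \<in> X \<Longrightarrow> f (inv_into X f z) = z" using bij by (metis bij_betw_def f_inv_into_f)
  have h_f: "\<And>z. z \<in> X \<Longrightarrow> inv_into X f (f z) = z" using bij by (metis bij_betw_def inv_into_f_f)
  have low_f: "dist x y \<le> M * dist (f x) (f y)" if "x \<in> X" "y \<in> X" for x y
    using up_g[OF f_mem f_mem] h_f that by simp
  have low_g: "dist x y \<le> M * dist (inv_into X f x) (inv_into X f y)" if "x \<in> X" "y \<in> X" for x y
    using up_f[OF h_mem h_mem] f_h that by simp
  have "bilip_bound X f M" "bilip_bound X (inv_into X f) M"
    unfolding bilip_bound_def using up_f low_f up_g low_g by auto
  then show ?thesis using that \<open>M > 0\<close> by blast
qed

lemma iter_int_props:
  assumes bij: "bij_betw g X X" and x: "x \<in> X"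
  shows iter_int_mem: "iter_int X g n x \<in> X"
    and iter_int_succ: "iter_int X g (n + 1) x = g (iter_int X g n x)"
    and iter_int_pred: "iter_int X g (n - 1) x = inv_into X g (iter_int X g n x)"
proof -
  have g_mem: "\<And>z. z \<in> X \<Longrightarrow> g z \<in> X" using bij by (meson bij_betwE)
  have h_mem: "\<And>z. z \<in> X \<Longrightarrow> inv_into X g z \<in> X" using bij by (metis bij_betw_def inv_into_into)
  have g_h: "\<And>z. z \<in> X \<Longrightarrow> g (inv_into X g z) = z" using bij by (metis bij_betw_def f_inv_into_f)
  have h_g: "\<And>z. z \<in> X \<Longrightarrow> inv_into X g (g z) = z" using bij by (metis bij_betw_def inv_into_f_f)
  have pos_mem: "(g ^^ k) z \<in> X" if "z \<in> X" for k z by (induction k) (use that g_mem in auto)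
  have neg_mem: "(inv_into X g ^^ k) z \<in> X" if "z \<in> X" for k z by (induction k) (use that h_mem in auto)
  have mem: "iter_int X g m x \<in> X" for m unfolding iter_int_def using pos_mem neg_mem x by auto
  have succ: "iter_int X g (m + 1) x = g (iter_int X g m x)" for m
  proof (cases "m \<ge> 0")
    case True
    then have "nat (m + 1) = Suc (nat m)" by simp
    then show ?thesis using True unfolding iter_int_def by simp
  next
    case False
    define k where "k = nat (- m) - 1"
    have "nat (- m) = Suc k" using False k_def by simp
    then have "iter_int X g m x = inv_into X g ((inv_into X g ^^ k) x)"
      using False unfolding iter_int_def by simp
    moreover have "iter_int X g (m + 1) x = (inv_into X g ^^ k) x"
      using False k_def unfolding iter_int_def by (cases "m + 1 \<ge> 0") (auto simp: nat_diff_distrib)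
    ultimately show ?thesis using g_h neg_mem x by simp
  qed
  show "iter_int X g n x \<in> X" by (rule mem)
  show "iter_int X g (n + 1) x = g (iter_int X g n x)" by (rule succ)
  show "iter_int X g (n - 1) x = inv_into X g (iter_int X g n x)"
    using succ[of "n - 1"] h_g mem[of "n - 1"] by simp
qed

definition hyperbolic_at :: "'a::metric_space set \<Rightarrow> ('a \<Rightarrow> 'a) \<Rightarrow> real \<Rightarrow> real \<Rightarrow> bool" where
  "hyperbolic_at X g \<delta> c \<longleftrightarrow> (\<forall>x\<in>X. \<forall>y\<in>X. dist x y < \<delta> \<longrightarrow>
     c * dist x y \<le> max (dist (g x) (g y)) (dist (inv_into X g x) (inv_into X g y)))"

lemma hyperbolic_metric_iff:
  "hyperbolic_metric X f \<longleftrightarrow> (\<exists>\<delta>>0. \<exists>c>1. hyperbolic_at X f \<delta> c)"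
  unfolding hyperbolic_metric_def hyperbolic_at_def by simp

text \<open>The supremum argument: along two distinct orbits staying \<delta>/2-close, the distance
  exceeding S/s (S the supremum) is expanded by one step beyond S.\<close>
lemma hyperbolic_at_imp_expansive:
  assumes bij: "bij_betw g X X" and hyp: "hyperbolic_at X g \<delta> s" and "\<delta> > 0" "s > 1"
  shows "expansive_const X g (\<delta> / 2)"
  unfolding expansive_const_def
proof (intro conjI ballI impI)
  show "\<delta> / 2 > 0" using \<open>\<delta> > 0\<close> by simp
  fix x y assume x: "x \<in> X" and y: "y \<in> X"
    and close: "\<forall>n::int. dist (iter_int X g n x) (iter_int X g n y) \<le> \<delta> / 2"
  define a where "a n = dist (iter_int X g n x) (iter_int X g n y)" for n
  show "x = y"
  proof (rule ccontr)
    assume "x \<noteq> y"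
    then have a0: "a 0 > 0" unfolding a_def iter_int_def by simp
    have bdd: "bdd_above (range a)" using close unfolding a_def bdd_above_def by blast
    define S where "S = Sup (range a)"
    have a_le_S: "a n \<le> S" for n unfolding S_def using bdd by (rule cSup_upper[rotated]) simp
    have "S > 0" using a_le_S[of 0] a0 by simp
    have "\<not> (\<forall>n. a n \<le> S / s)"
    proof
      assume "\<forall>n. a n \<le> S / s"
      then have "S \<le> S / s" unfolding S_def by (intro cSup_least) auto
      then show False using \<open>S > 0\<close> \<open>s > 1\<close> by (simp add: le_divide_eq)
    qed
    then obtain n where n: "a n > S / s" by (auto simp: not_le)
    have "a n < \<delta>" using close[rule_format, of n] \<open>\<delta> > 0\<close> unfolding a_def by linarith
    then have "s * a n \<le> max (a (n + 1)) (a (n - 1))"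
      using hyp iter_int_mem[OF bij x, of n] iter_int_mem[OF bij y, of n]
      unfolding hyperbolic_at_def a_def
      by (simp add: iter_int_succ[OF bij x] iter_int_succ[OF bij y]
                    iter_int_pred[OF bij x] iter_int_pred[OF bij y])
    moreover have "s * a n > S" using n \<open>s > 1\<close> by (simp add: divide_less_eq mult.commute)
    ultimately show False using a_le_S[of "n + 1"] a_le_S[of "n - 1"] by linarith
  qed
qed

lemma sup_dist_nonneg:
  assumes "bounded X" "\<And>x. x \<in> X \<Longrightarrow> \<phi> x \<in> X" "\<And>x. x \<in> X \<Longrightarrow> \<psi> x \<in> X"
  shows "0 \<le> Sup (insert 0 ((\<lambda>x. dist (\<phi> x) (\<psi> x)) ` X))"
proof (rule cSup_upper)
  have "\<forall>z \<in> insert 0 ((\<lambda>x. dist (\<phi> x) (\<psi> x)) ` X). z \<le> diameter X"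
    using diameter_ge_0[OF assms(1)] diameter_bounded_bound[OF assms(1)] assms(2,3) by auto
  then show "bdd_above (insert 0 ((\<lambda>x. dist (\<phi> x) (\<psi> x)) ` X))" unfolding bdd_above_def by blast
qed simp

lemma d_C0_nonneg:
  assumes "bounded X" "bij_betw f X X" "bij_betw g X X"
  shows "0 \<le> d_C0 X f g"
proof -
  have maps: "\<And>h x. bij_betw h X X \<Longrightarrow> x \<in> X \<Longrightarrow> h x \<in> X \<and> inv_into X h x \<in> X"
    by (metis bij_betwE bij_betw_def inv_into_into)
  have "0 \<le> Sup (insert 0 ((\<lambda>x. dist (f x) (g x)) ` X))"
    using sup_dist_nonneg[OF assms(1)] maps assms(2,3) by blast
  moreover have "0 \<le> Sup (insert 0 ((\<lambda>x. dist (inv_into X f x) (inv_into X g x)) ` X))"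
    using sup_dist_nonneg[OF assms(1)] maps assms(2,3) by blast
  ultimately show ?thesis unfolding d_C0_def by simp
qed

text \<open>If \<phi> and \<psi> are both bi-Lipschitz with constants A and B, then every distance ratio
  lies in [1/(AB), AB], so the log-ratios are bounded by AB.\<close>
lemma log_ratio_bdd:
  assumes \<phi>: "bilip_bound X \<phi> A" and \<psi>: "bilip_bound X \<psi> B" and "A > 0" "B > 0"
  shows "bdd_above (insert 0 {\<bar>ln (dist (\<phi> x) (\<phi> y) / dist (\<psi> x) (\<psi> y))\<bar> | x y. x \<in> X \<and> y \<in> X \<and> x \<noteq> y})"
proof -
  have "\<bar>ln (dist (\<phi> x) (\<phi> y) / dist (\<psi> x) (\<psi> y))\<bar> \<le> A * B" if "x \<in> X" "y \<in> X" "x \<noteq> y" for x y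
  proof -
    let ?d = "dist x y" and ?p = "dist (\<phi> x) (\<phi> y)" and ?q = "dist (\<psi> x) (\<psi> y)"
    have p: "?p > 0" and q: "?q > 0" using bilip_bound_dist_pos \<phi> \<psi> that by blast+
    have "?p \<le> A * ?d" "?d \<le> B * ?q" "?q \<le> B * ?d" "?d \<le> A * ?p"
      using \<phi> \<psi> that unfolding bilip_bound_def by auto
    then have "?p \<le> (A * B) * ?q" "?q \<le> (A * B) * ?p" using \<open>A > 0\<close> \<open>B > 0\<close>
      by (smt (verit, best) mult.assoc mult.commute mult_left_mono)+
    then have r1: "?p / ?q \<le> A * B" and r2: "?q / ?p \<le> A * B"
      using p q by (simp_all add: divide_le_eq)
    have "ln (?p / ?q) \<le> ?p / ?q - 1" using p q by (intro ln_le_minus_one) simp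
    moreover have "- ln (?p / ?q) \<le> ?q / ?p - 1"
      using p q ln_le_minus_one[of "?q / ?p"] by (simp add: ln_div)
    ultimately show ?thesis using r1 r2 p q by (smt (verit) divide_pos_pos)
  qed
  moreover have "0 \<le> A * B" using \<open>A > 0\<close> \<open>B > 0\<close> by simp
  ultimately show ?thesis unfolding bdd_above_def by blast
qed

lemma d_L'_bounds:
  assumes "bilip_bound X \<phi> A" "bilip_bound X \<psi> B" "A > 0" "B > 0"
  shows d_L'_nonneg: "0 \<le> d_L' X \<phi> \<psi>"
    and d_L'_upper: "x \<in> X \<Longrightarrow> y \<in> X \<Longrightarrow> x \<noteq> y \<Longrightarrow>
      \<bar>ln (dist (\<phi> x) (\<phi> y) / dist (\<psi> x) (\<psi> y))\<bar> \<le> d_L' X \<phi> \<psi>"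
  using log_ratio_bdd[OF assms] unfolding d_L'_def by (auto intro!: cSup_upper)

lemma d_L'_small_ratio:
  assumes "bilip_bound X \<phi> A" "bilip_bound X \<psi> B" "A > 0" "B > 0"
    and small: "d_L' X \<phi> \<psi> < ln s" and "s > 0"
    and "x \<in> X" "y \<in> X" "x \<noteq> y"
  shows "dist (\<phi> x) (\<phi> y) < s * dist (\<psi> x) (\<psi> y)"
proof -
  let ?p = "dist (\<phi> x) (\<phi> y)" and ?q = "dist (\<psi> x) (\<psi> y)"
  have p: "?p > 0" and q: "?q > 0" using bilip_bound_dist_pos assms by blast+
  have "ln (?p / ?q) < ln s" using d_L'_upper[OF assms(1-4,7-9)] small by linarith
  then have "?p / ?q < s" using p q \<open>s > 0\<close> by simp
  then show ?thesis using q by (simp add: divide_less_eq mult.commute)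
qed

lemma d_L_small_components:
  assumes "bounded X" "bilip_homeo X f" "bilip_homeo X g" "d_L X f g < \<epsilon>"
  shows "d_L' X f g < \<epsilon>" "d_L' X (inv_into X f) (inv_into X g) < \<epsilon>"
proof -
  obtain Lf where "Lf > 0" "bilip_bound X f Lf" "bilip_bound X (inv_into X f) Lf"
    using bilip_homeo_bound[OF assms(2)] .
  moreover obtain Lg where "Lg > 0" "bilip_bound X g Lg" "bilip_bound X (inv_into X g) Lg"
    using bilip_homeo_bound[OF assms(3)] .
  moreover have "0 \<le> d_C0 X f g"
    using d_C0_nonneg assms(1-3) unfolding bilip_homeo_def by blast
  ultimately have "0 \<le> d_C0 X f g" "0 \<le> d_L' X f g" "0 \<le> d_L' X (inv_into X f) (inv_into X g)"
    using d_L'_nonneg by blast+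
  then show "d_L' X f g < \<epsilon>" "d_L' X (inv_into X f) (inv_into X g) < \<epsilon>"
    using assms(4) unfolding d_L_def by linarith+
qed

lemma hyperbolic_at_transfer:
  assumes f: "bilip_homeo X f" and g: "bilip_homeo X g"
    and hyp: "hyperbolic_at X f \<delta> (s * s)" and "s > 1"
    and fwd: "d_L' X f g < ln s" and bwd: "d_L' X (inv_into X f) (inv_into X g) < ln s"
  shows "hyperbolic_at X g \<delta> s"
  unfolding hyperbolic_at_def
proof (intro ballI impI)
  fix x y assume x: "x \<in> X" and y: "y \<in> X" and "dist x y < \<delta>"
  let ?M = "max (dist (g x) (g y)) (dist (inv_into X g x) (inv_into X g y))"
  show "s * dist x y \<le> ?M"
  proof (cases "x = y")
    case False
    obtain Lf where "Lf > 0" "bilip_bound X f Lf" "bilip_bound X (inv_into X f) Lf"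
      using bilip_homeo_bound[OF f] .
    moreover obtain Lg where "Lg > 0" "bilip_bound X g Lg" "bilip_bound X (inv_into X g) Lg"
      using bilip_homeo_bound[OF g] .
    ultimately have "dist (f x) (f y) < s * dist (g x) (g y)"
      "dist (inv_into X f x) (inv_into X f y) < s * dist (inv_into X g x) (inv_into X g y)"
      using d_L'_small_ratio fwd bwd \<open>s > 1\<close> x y False by (meson less_trans zero_less_one)+
    then have "max (dist (f x) (f y)) (dist (inv_into X f x) (inv_into X f y)) < s * ?M"
      using \<open>s > 1\<close> by (smt (verit) mult_left_mono max.cobounded1 max.cobounded2)
    moreover have "s * (s * dist x y) \<le> max (dist (f x) (f y)) (dist (inv_into X f x) (inv_into X f y))"
      using hyp x y \<open>dist x y < \<delta>\<close> unfolding hyperbolic_at_def by (simp add: mult.assoc)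
    ultimately have "s * (s * dist x y) < s * ?M" by linarith
    then show ?thesis using \<open>s > 1\<close> by simp
  qed simp
qed

theorem mainTheorem6:
  fixes X :: "'a::metric_space set" and f :: "'a \<Rightarrow> 'a"
  assumes "compact X"
    and "bilip_homeo X f"
    and "hyperbolic_metric X f"
  shows "\<exists>\<epsilon>>0. \<exists>\<delta>>0. \<forall>g. bilip_homeo X g \<and> d_L X f g < \<epsilon> \<longrightarrow> expansive_const X g \<delta>"
proof -
  obtain \<delta> c where "\<delta> > 0" "c > 1" and hyp: "hyperbolic_at X f \<delta> c"
    using assms(3) unfolding hyperbolic_metric_iff by blast
  define s where "s = sqrt c"
  have "s > 1" "s * s = c" using \<open>c > 1\<close> unfolding s_def by auto
  have "expansive_const X g (\<delta> / 2)" if g: "bilip_homeo X g" and close: "d_L X f g < ln s" for g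
  proof -
    have "hyperbolic_at X g \<delta> s"
      using hyperbolic_at_transfer[OF assms(2) g] hyp \<open>s * s = c\<close> \<open>s > 1\<close>
        d_L_small_components[OF compact_imp_bounded[OF assms(1)] assms(2) g close] by blast
    moreover have "bij_betw g X X" using g unfolding bilip_homeo_def by blast
    ultimately show ?thesis using hyperbolic_at_imp_expansive \<open>\<delta> > 0\<close> \<open>s > 1\<close> by blast
  qed
  moreover have "ln s > 0" "\<delta> / 2 > 0" using \<open>s > 1\<close> \<open>\<delta> > 0\<close> by auto
  ultimately show ?thesis by blast
qed

end
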